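(* Let $\mathcal Q_1,\mathcal Q_2,\dots$ be countably many collections of probability measures on $\{0,1\}^{\mathbb N}$, each of which is UME-learnable. Then $\mathcal Q=\bigcup_{i\in\mathbb N}\mathcal Q_i$ is UME-learnable.
   Context: $\{0,1\}^{\mathbb N}$ carries the product $\sigma$-algebra. For a probability measure $\mu$ on $\{0,1\}^{\mathbb N}$, $\mathrm{Mean}(\mu)\in[0,1]^{\mathbb N}$ is the vector whose $j$-th coordinate is $\mathbb E[X_j]$ for $X\sim\mu$. A collection $\mathcal Q$ of such measures is UME-learnable if there exist (measurable) estimators $\mathcal A_n:(\{0,1\}^{\mathbb N})^n\to[0,1]^{\mathbb N}$, $n\in\mathbb N$, such that for every $\mu\in\mathcal Q$, $\mathbb E_{S\sim\mu^n}\|\mathcal A_n(S)-\mathrm{Mean}(\mu)\|_\infty\to0$ as $n\to\infty$, where $S$ consists of $n$ i.i.d. draws from $\mu$. *)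

theory Defs
  imports "HOL-Probability.Probability"
begin

definition cantor :: "(nat \<Rightarrow> bool) measure" where
  "cantor = (\<Pi>\<^sub>M j\<in>(UNIV::nat set). count_space (UNIV::bool set))"

definition prob_on_cantor :: "(nat \<Rightarrow> bool) measure \<Rightarrow> bool" where
  "prob_on_cantor \<mu> \<longleftrightarrow> prob_space \<mu> \<and> sets \<mu> = sets cantor"

definition Mean :: "(nat \<Rightarrow> bool) measure \<Rightarrow> nat \<Rightarrow> real" where
  "Mean \<mu> j = (\<integral>x. (if x j then 1 else 0) \<partial>\<mu>)"

definition samples :: "nat \<Rightarrow> (nat \<Rightarrow> bool) measure \<Rightarrow> (nat \<Rightarrow> (nat \<Rightarrow> bool)) measure" where
  "samples n \<mu> = (\<Pi>\<^sub>M i\<in>{..<n}. \<mu>)"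

definition sup_err :: "nat \<Rightarrow> ((nat \<Rightarrow> (nat \<Rightarrow> bool)) \<Rightarrow> nat \<Rightarrow> real) \<Rightarrow> (nat \<Rightarrow> bool) measure \<Rightarrow> ennreal" where
  "sup_err n An \<mu> = (\<integral>\<^sup>+ S. (SUP j. ennreal \<bar>An S j - Mean \<mu> j\<bar>) \<partial>(samples n \<mu>))"

definition UME_learnable :: "(nat \<Rightarrow> bool) measure set \<Rightarrow> bool" where
  "UME_learnable Q \<longleftrightarrow>
     (\<exists>A :: nat \<Rightarrow> (nat \<Rightarrow> (nat \<Rightarrow> bool)) \<Rightarrow> nat \<Rightarrow> real.
        (\<forall>n. A n \<in> measurable (\<Pi>\<^sub>M i\<in>{..<n}. cantor) (\<Pi>\<^sub>M j\<in>(UNIV::nat set). (borel :: real measure))) \<and>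
        (\<forall>n S j. A n S j \<in> {0..1}) \<and>
        (\<forall>\<mu>\<in>Q. (\<lambda>n. sup_err n (A n) \<mu>) \<longlonglongrightarrow> 0))"

end

theory Submission
  imports Defs "HOL-Real_Asymp.Real_Asymp"
begin

text \<open>Split a sample of size \<open>n\<close> into halves. The first \<open>K\<close> learners, run on the first half,
  propose mean vectors \<open>v a\<close>; the second half gives empirical means \<open>e\<close>. For every pair \<open>a, b\<close>
  fix a coordinate \<open>j a b\<close> on which \<open>v a\<close> and \<open>v b\<close> almost realise their sup-distance, and let the
  winner \<open>s\<close> be the candidate minimising \<open>max b. |v a (j a b) - e (j a b)|\<close> (a Scheffe-type
  tournament). For the true mean \<open>p\<close> and any \<open>i < K\<close>, the triangle inequality along \<open>j s i\<close> gives
  \<open>\<parallel>v s - p\<parallel> \<le> 3 \<parallel>v i - p\<parallel> + 2 \<Sum>a b. |e (j a b) - p (j a b)| + slack\<close> in the sup-norm.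
  The coordinates \<open>j a b\<close> depend only on the first half, so conditionally on it each hold-out error
  is the deviation of a mean of \<open>n/2\<close> independent bits, whose expectation is at most
  \<open>1 / sqrt (n/2)\<close> by Cauchy-Schwarz. Letting \<open>K\<close> grow like \<open>n powr (1/8)\<close> makes every learner
  eventually take part while \<open>K\<^sup>2 / sqrt n \<rightarrow> 0\<close>.\<close>

definition sup_dist :: "(nat \<Rightarrow> real) \<Rightarrow> (nat \<Rightarrow> real) \<Rightarrow> ennreal" where
  "sup_dist u w = (SUP j. ennreal \<bar>u j - w j\<bar>)"

lemma ennreal_abs_diff_le_sup_dist: "ennreal \<bar>u j - w j\<bar> \<le> sup_dist u w"
  unfolding sup_dist_def by (rule SUP_upper) simp

lemma ennreal_abs_diff_triangle: "ennreal \<bar>x - z\<bar> \<le> ennreal \<bar>x - y\<bar> + ennreal \<bar>y - (z::real)\<bar>"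
  by (simp add: ennreal_plus[symmetric] del: ennreal_plus)

lemma sup_dist_triangle: "sup_dist u w \<le> sup_dist u v + sup_dist v w"
  unfolding sup_dist_def
  by (rule SUP_least, rule order.trans[OF ennreal_abs_diff_triangle],
      intro add_mono; rule SUP_upper; simp)

lemma sup_dist_le_1:
  assumes "\<And>j. u j \<in> {0..1}" "\<And>j. w j \<in> {0..1}"
  shows "sup_dist u w \<le> 1"
  unfolding sup_dist_def
proof (rule SUP_least)
  fix j show "ennreal \<bar>u j - w j\<bar> \<le> 1"
    using assms[of j] by (simp add: abs_le_iff)
qed

lemma measurable_sup_dist[measurable]:
  assumes [measurable]: "\<And>j. (\<lambda>x. u x j) \<in> borel_measurable M" "\<And>j. (\<lambda>x. w x j) \<in> borel_measurable M"
  shows "(\<lambda>x. sup_dist (u x) (w x)) \<in> borel_measurable M"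
  unfolding sup_dist_def by measurable

text \<open>The supremum need not be attained, so the pairwise test coordinate only realises it up to the
  slack \<open>\<delta>\<close>; the slack reappears as the additive term \<open>1 / Suc n\<close> of the final error bound.\<close>

definition near_max_coord :: "real \<Rightarrow> (nat \<Rightarrow> real) \<Rightarrow> (nat \<Rightarrow> real) \<Rightarrow> nat" where
  "near_max_coord \<delta> u w = (LEAST j. sup_dist u w \<le> ennreal \<bar>u j - w j\<bar> + ennreal \<delta>)"

lemma sup_dist_le_near_max_coord:
  assumes "sup_dist u w \<noteq> \<infinity>" "\<delta> > 0"
  defines "j \<equiv> near_max_coord \<delta> u w"
  shows "sup_dist u w \<le> ennreal \<bar>u j - w j\<bar> + ennreal \<delta>"
proof -
  have "\<exists>j. sup_dist u w \<le> ennreal \<bar>u j - w j\<bar> + ennreal \<delta>"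
    using SUP_approx_ennreal[OF assms(2) _ sup_dist_def assms(1)] by (auto intro: less_imp_le)
  then show ?thesis unfolding j_def near_max_coord_def by (rule LeastI_ex)
qed

lemma measurable_near_max_coord[measurable]:
  assumes [measurable]: "\<And>j. (\<lambda>x. u x j) \<in> borel_measurable M" "\<And>j. (\<lambda>x. w x j) \<in> borel_measurable M"
  shows "(\<lambda>x. near_max_coord \<delta> (u x) (w x)) \<in> measurable M (count_space UNIV)"
  unfolding near_max_coord_def by measurable

definition tournament_score :: "real \<Rightarrow> nat \<Rightarrow> (nat \<Rightarrow> nat \<Rightarrow> real) \<Rightarrow> (nat \<Rightarrow> real) \<Rightarrow> nat \<Rightarrow> real" where
  "tournament_score \<delta> K v e a = (MAX b\<in>{..<K}. \<bar>(v a - e) (near_max_coord \<delta> (v a) (v b))\<bar>)"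

definition tournament_winner :: "real \<Rightarrow> nat \<Rightarrow> (nat \<Rightarrow> nat \<Rightarrow> real) \<Rightarrow> (nat \<Rightarrow> real) \<Rightarrow> nat" where
  "tournament_winner \<delta> K v e =
     (LEAST a. a < K \<and> (\<forall>b<K. tournament_score \<delta> K v e a \<le> tournament_score \<delta> K v e b))"

lemma tournament_winner_minimal:
  assumes "0 < K"
  shows "tournament_winner \<delta> K v e < K \<and>
    (\<forall>b<K. tournament_score \<delta> K v e (tournament_winner \<delta> K v e) \<le> tournament_score \<delta> K v e b)"
proof -
  let ?sc = "tournament_score \<delta> K v e"
  obtain a where "a < K" "?sc a = Min (?sc ` {..<K})"
    using Min_in[of "?sc ` {..<K}"] assms by fastforce
  then have "\<exists>a. a < K \<and> (\<forall>b<K. ?sc a \<le> ?sc b)"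
    by (intro exI[of _ a]) simp
  then show ?thesis unfolding tournament_winner_def by (rule LeastI_ex)
qed

lemma abs_diff_le_tournament_score:
  "b < K \<Longrightarrow> \<bar>(v a - e) (near_max_coord \<delta> (v a) (v b))\<bar> \<le> tournament_score \<delta> K v e a"
  unfolding tournament_score_def by (intro Max_ge) auto

lemma member_le_double_sum:
  fixes f :: "'a \<Rightarrow> 'b \<Rightarrow> ennreal"
  assumes "finite A" "finite B" "a \<in> A" "b \<in> B"
  shows "f a b \<le> (\<Sum>a\<in>A. \<Sum>b\<in>B. f a b)"
proof -
  have "f a b \<le> (\<Sum>b\<in>B. f a b)" using assms by (intro member_le_sum) auto
  also have "\<dots> \<le> (\<Sum>a\<in>A. \<Sum>b\<in>B. f a b)"
    using assms by (intro member_le_sum[where f = "\<lambda>a. \<Sum>b\<in>B. f a b"]) auto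
  finally show ?thesis .
qed

lemma tournament_score_le:
  fixes v :: "nat \<Rightarrow> nat \<Rightarrow> real" and e p :: "nat \<Rightarrow> real"
  assumes "a < K"
  shows "ennreal (tournament_score \<delta> K v e a) \<le>
    sup_dist (v a) p + (\<Sum>a<K. \<Sum>b<K. ennreal \<bar>(e - p) (near_max_coord \<delta> (v a) (v b))\<bar>)"
    (is "_ \<le> _ + ?\<eta>")
proof -
  obtain b where "b < K" and "tournament_score \<delta> K v e a = \<bar>(v a - e) (near_max_coord \<delta> (v a) (v b))\<bar>"
    using Max_in[of "(\<lambda>b. \<bar>(v a - e) (near_max_coord \<delta> (v a) (v b))\<bar>) ` {..<K}"] assms
    unfolding tournament_score_def by fastforce
  moreover define j where "j = near_max_coord \<delta> (v a) (v b)"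
  ultimately have score: "tournament_score \<delta> K v e a = \<bar>v a j - e j\<bar>" and "b < K"
    by simp_all
  have "ennreal \<bar>(e - p) j\<bar> \<le> ?\<eta>"
    unfolding j_def using \<open>b < K\<close> assms by (intro member_le_double_sum) auto
  then have "ennreal \<bar>p j - e j\<bar> \<le> ?\<eta>" by (simp add: abs_minus_commute)
  then have "ennreal \<bar>v a j - p j\<bar> + ennreal \<bar>p j - e j\<bar> \<le> sup_dist (v a) p + ?\<eta>"
    by (intro add_mono ennreal_abs_diff_le_sup_dist)
  with ennreal_abs_diff_triangle show ?thesis unfolding score by (rule order.trans)
qed

lemma sup_dist_tournament_winner_le:
  fixes v :: "nat \<Rightarrow> nat \<Rightarrow> real" and e p :: "nat \<Rightarrow> real"
  assumes range: "\<And>a j. v a j \<in> {0..1}" and "i < K" "\<delta> > 0"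
  shows "sup_dist (v (tournament_winner \<delta> K v e)) p \<le>
    3 * sup_dist (v i) p + 2 * (\<Sum>a<K. \<Sum>b<K. ennreal \<bar>(e - p) (near_max_coord \<delta> (v a) (v b))\<bar>) + ennreal \<delta>"
    (is "_ \<le> 3 * ?\<epsilon> + 2 * ?\<eta> + _")
proof -
  define s where "s = tournament_winner \<delta> K v e"
  define j where "j = near_max_coord \<delta> (v s) (v i)"
  have s: "s < K" "tournament_score \<delta> K v e s \<le> tournament_score \<delta> K v e i"
    using tournament_winner_minimal[of K \<delta> v e] \<open>i < K\<close> unfolding s_def by auto
  have "sup_dist (v s) (v i) \<noteq> \<infinity>"
    using sup_dist_le_1[of "v s" "v i"] range by (auto simp: top_unique)
  have "sup_dist (v s) p \<le> sup_dist (v s) (v i) + ?\<epsilon>"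
    by (rule sup_dist_triangle)
  also have "sup_dist (v s) (v i) \<le> ennreal \<bar>v s j - v i j\<bar> + ennreal \<delta>"
    unfolding j_def using \<open>sup_dist (v s) (v i) \<noteq> \<infinity>\<close> \<open>\<delta> > 0\<close> by (rule sup_dist_le_near_max_coord)
  also have "ennreal \<bar>v s j - v i j\<bar> \<le> ennreal \<bar>v s j - e j\<bar> + ennreal \<bar>e j - v i j\<bar>"
    by (rule ennreal_abs_diff_triangle)
  also have "ennreal \<bar>e j - v i j\<bar> \<le> ennreal \<bar>e j - p j\<bar> + ennreal \<bar>p j - v i j\<bar>"
    by (rule ennreal_abs_diff_triangle)
  also have "ennreal \<bar>v s j - e j\<bar> \<le> ennreal (tournament_score \<delta> K v e i)"
    using abs_diff_le_tournament_score[OF \<open>i < K\<close>, where v = v and a = s and e = e and \<delta> = \<delta>] s(2)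
    unfolding j_def by (intro ennreal_leI) simp
  also have "\<dots> \<le> ?\<epsilon> + ?\<eta>"
    by (rule tournament_score_le[OF \<open>i < K\<close>])
  also have "ennreal \<bar>e j - p j\<bar> \<le> ?\<eta>"
    using member_le_double_sum[of "{..<K}" "{..<K}" s i "\<lambda>a b. ennreal \<bar>(e - p) (near_max_coord \<delta> (v a) (v b))\<bar>"]
      s(1) \<open>i < K\<close> unfolding j_def by simp
  also have "ennreal \<bar>p j - v i j\<bar> \<le> ?\<epsilon>"
    using ennreal_abs_diff_le_sup_dist[of "v i" j p] by (simp add: abs_minus_commute)
  finally have "sup_dist (v s) p \<le> ?\<epsilon> + ?\<eta> + (?\<eta> + ?\<epsilon>) + ennreal \<delta> + ?\<epsilon>"
    by (simp add: add_mono)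
  also have "\<dots> = 3 * ?\<epsilon> + 2 * ?\<eta> + ennreal \<delta>"
    unfolding numeral_Bit1 numeral_One one_add_one[symmetric] distrib_right mult_1 by (simp only: ac_simps)
  finally show ?thesis unfolding s_def .
qed

lemma measurable_tournament_winner[measurable]:
  assumes [measurable]: "\<And>a j. (\<lambda>x. v x a j) \<in> borel_measurable M" "\<And>j. (\<lambda>x. e x j) \<in> borel_measurable M"
  shows "(\<lambda>x. tournament_winner \<delta> K (v x) (e x)) \<in> measurable M (count_space UNIV)"
proof -
  have [measurable]: "(\<lambda>x. tournament_score \<delta> K (v x) (e x) a) \<in> borel_measurable M" for a
    unfolding tournament_score_def fun_diff_def by measurable
  show ?thesis unfolding tournament_winner_def by measurable
qed

type_synonym estimator = "(nat \<Rightarrow> nat \<Rightarrow> bool) \<Rightarrow> nat \<Rightarrow> real"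

definition empirical_mean :: "nat set \<Rightarrow> estimator" where
  "empirical_mean I S j = (\<Sum>t\<in>I. of_bool (S t j)) / card I"

definition first_half_estimates :: "(nat \<Rightarrow> nat \<Rightarrow> estimator) \<Rightarrow> nat \<Rightarrow> (nat \<Rightarrow> nat \<Rightarrow> bool) \<Rightarrow> nat \<Rightarrow> nat \<Rightarrow> real" where
  "first_half_estimates A n S a = A a (n div 2) (restrict S {..<n div 2})"

definition tournament_estimator :: "(nat \<Rightarrow> nat \<Rightarrow> estimator) \<Rightarrow> (nat \<Rightarrow> nat) \<Rightarrow> nat \<Rightarrow> estimator" where
  "tournament_estimator A K n S = first_half_estimates A n S
     (tournament_winner (1 / Suc n) (K n) (first_half_estimates A n S) (empirical_mean {n div 2..<n} S))"

lemma measurable_cantor_coord[measurable]: "(\<lambda>x. x j) \<in> measurable cantor (count_space UNIV)"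
  unfolding cantor_def by measurable

lemma measurable_empirical_mean[measurable]:
  assumes "I \<subseteq> J"
  shows "(\<lambda>S. empirical_mean I S j) \<in> borel_measurable (\<Pi>\<^sub>M i\<in>J. cantor)"
proof -
  have [measurable]: "(\<lambda>S. S t j) \<in> measurable (\<Pi>\<^sub>M i\<in>J. cantor) (count_space UNIV)" if "t \<in> J" for t
    using that by measurable
  show ?thesis unfolding empirical_mean_def by measurable (use assms in auto)
qed

lemma measurable_first_half_estimates:
  assumes "\<And>a m. A a m \<in> measurable (\<Pi>\<^sub>M i\<in>{..<m}. cantor) (\<Pi>\<^sub>M j\<in>UNIV. borel)" and "{..<n div 2} \<subseteq> I"
  shows "(\<lambda>S. first_half_estimates A n S a j) \<in> borel_measurable (\<Pi>\<^sub>M i\<in>I. cantor)"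
proof -
  have "(\<lambda>S. restrict S {..<n div 2}) \<in> measurable (\<Pi>\<^sub>M i\<in>I. cantor) (\<Pi>\<^sub>M i\<in>{..<n div 2}. cantor)"
    using assms(2) by (rule measurable_restrict_subset)
  then show ?thesis
    unfolding first_half_estimates_def using assms(1) by measurable
qed

lemma measurable_tournament_estimator:
  assumes "\<And>a m. A a m \<in> measurable (\<Pi>\<^sub>M i\<in>{..<m}. cantor) (\<Pi>\<^sub>M j\<in>UNIV. borel)"
  shows "tournament_estimator A K n \<in> measurable (\<Pi>\<^sub>M i\<in>{..<n}. cantor) (\<Pi>\<^sub>M j\<in>UNIV. borel)"
proof (rule measurable_PiM_single')
  fix j
  have winner: "(\<lambda>S. tournament_winner (1 / Suc n) (K n) (first_half_estimates A n S) (empirical_mean {n div 2..<n} S))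
      \<in> measurable (\<Pi>\<^sub>M i\<in>{..<n}. cantor) (count_space UNIV)"
    by (intro measurable_tournament_winner measurable_first_half_estimates[OF assms] measurable_empirical_mean) auto
  show "(\<lambda>S. tournament_estimator A K n S j) \<in> borel_measurable (\<Pi>\<^sub>M i\<in>{..<n}. cantor)"
    unfolding tournament_estimator_def using measurable_first_half_estimates[OF assms, of n "{..<n}"] winner
    by (rule measurable_compose_countable[where f = "\<lambda>a S. first_half_estimates A n S a j"]) auto
qed simp

lemma (in prob_space) integral_PiM_mult_coords:
  fixes f g :: "'a \<Rightarrow> real"
  assumes "finite J" "t \<in> J" "s \<in> J" "t \<noteq> s" "integrable M f" "integrable M g"
  shows "(\<integral>y. f (y t) * g (y s) \<partial>PiM J (\<lambda>_. M)) = expectation f * expectation g"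
proof -
  interpret product_sigma_finite "\<lambda>_. M"
    unfolding product_sigma_finite_def by (simp add: prob_space_imp_sigma_finite prob_space_axioms)
  define h where "h i = (if i = t then f else if i = s then g else (\<lambda>_. 1))" for i
  have "(\<Prod>i\<in>J. h i (y i)) = f (y t) * g (y s)" for y
  proof -
    have "(\<Prod>i\<in>J. h i (y i)) = (\<Prod>i\<in>{t, s}. h i (y i))"
      using assms(1-3) by (intro prod.mono_neutral_right) (auto simp: h_def)
    then show ?thesis using assms(4) by (simp add: h_def)
  qed
  moreover have "(\<integral>y. (\<Prod>i\<in>J. h i (y i)) \<partial>PiM J (\<lambda>_. M)) = (\<Prod>i\<in>J. expectation (h i))"
    using assms by (intro product_integral_prod) (auto simp: h_def)
  moreover have "(\<Prod>i\<in>J. expectation (h i)) = (\<Prod>i\<in>{t, s}. expectation (h i))"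
    using assms(1-3) by (intro prod.mono_neutral_right) (auto simp: h_def prob_space)
  ultimately show ?thesis using assms(4) by (simp add: h_def)
qed

lemma (in prob_space) integral_sq_sum_coords_le:
  fixes g :: "'a \<Rightarrow> real"
  assumes "finite J" and [measurable]: "g \<in> borel_measurable M"
    and bounded: "\<And>x. \<bar>g x\<bar> \<le> 1" and centered: "expectation g = 0"
  shows "(\<integral>y. (\<Sum>t\<in>J. g (y t))\<^sup>2 \<partial>PiM J (\<lambda>_. M)) \<le> card J"
proof -
  interpret P: prob_space "PiM J (\<lambda>_. M)" by (rule prob_space_PiM) (rule prob_space_axioms)
  have g_int: "integrable M g"
    using bounded by (intro integrable_const_bound[where B = 1]) auto
  have int: "integrable (PiM J (\<lambda>_. M)) (\<lambda>y. g (y t) * g (y s))" if "t \<in> J" "s \<in> J" for t s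
    using that bounded by (intro P.integrable_const_bound[where B = 1]) (auto simp: abs_mult intro!: mult_le_one)
  have diag: "(\<integral>y. g (y t) * g (y t) \<partial>PiM J (\<lambda>_. M)) \<le> 1" if "t \<in> J" for t
  proof (rule P.integral_le_const[OF int[OF that that]])
    have "g x * g x \<le> 1" for x
      using mult_le_one[OF bounded[of x] abs_ge_zero bounded[of x]] by (simp only: abs_mult_self_eq)
    then show "AE y in PiM J (\<lambda>_. M). g (y t) * g (y t) \<le> 1" by simp
  qed
  have "(\<integral>y. (\<Sum>t\<in>J. g (y t))\<^sup>2 \<partial>PiM J (\<lambda>_. M)) =
      (\<Sum>t\<in>J. \<Sum>s\<in>J. \<integral>y. g (y t) * g (y s) \<partial>PiM J (\<lambda>_. M))"
    using int by (simp add: power2_eq_square sum_product)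
  also have "\<dots> = (\<Sum>t\<in>J. \<integral>y. g (y t) * g (y t) \<partial>PiM J (\<lambda>_. M))"
  proof (intro sum.cong refl)
    fix t assume "t \<in> J"
    have "(\<integral>y. g (y t) * g (y s) \<partial>PiM J (\<lambda>_. M)) = 0" if "s \<in> J - {t}" for s
      using integral_PiM_mult_coords[OF \<open>finite J\<close> \<open>t \<in> J\<close>, of s g g] that g_int centered by auto
    then show "(\<Sum>s\<in>J. \<integral>y. g (y t) * g (y s) \<partial>PiM J (\<lambda>_. M)) = (\<integral>y. g (y t) * g (y t) \<partial>PiM J (\<lambda>_. M))"
      using \<open>finite J\<close> \<open>t \<in> J\<close> by (subst sum.remove) auto
  qed
  also have "\<dots> \<le> (\<Sum>t\<in>J. 1)"
    by (intro sum_mono diag)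
  finally show ?thesis by simp
qed

lemma (in prob_space) nn_integral_sq_mean_coords_le:
  fixes g :: "'a \<Rightarrow> real"
  assumes "finite J" "J \<noteq> {}" and [measurable]: "g \<in> borel_measurable M"
    and bounded: "\<And>x. \<bar>g x\<bar> \<le> 1" and centered: "expectation g = 0"
  shows "(\<integral>\<^sup>+y. ennreal \<bar>(\<Sum>t\<in>J. g (y t)) / card J\<bar> ^ 2 \<partial>PiM J (\<lambda>_. M)) \<le> ennreal (1 / card J)"
proof -
  interpret P: prob_space "PiM J (\<lambda>_. M)" by (rule prob_space_PiM) (rule prob_space_axioms)
  define N where "N = real (card J)"
  have "N > 0" using assms(1,2) by (simp add: N_def card_gt_0_iff)
  define S where "S y = (\<Sum>t\<in>J. g (y t))" for y
  have [measurable]: "S \<in> borel_measurable (PiM J (\<lambda>_. M))"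
    unfolding S_def by measurable
  have "\<bar>S y\<bar> \<le> N" for y
  proof -
    have "\<bar>S y\<bar> \<le> (\<Sum>t\<in>J. \<bar>g (y t)\<bar>)" unfolding S_def by (rule sum_abs)
    also have "\<dots> \<le> N" unfolding N_def using sum_mono[of J "\<lambda>t. \<bar>g (y t)\<bar>" "\<lambda>_. 1"] bounded by simp
    finally show ?thesis .
  qed
  then have "(S y)\<^sup>2 \<le> N\<^sup>2" for y
    by (metis abs_le_square_iff abs_of_pos \<open>N > 0\<close>)
  then have S_sq_int: "integrable (PiM J (\<lambda>_. M)) (\<lambda>y. (S y)\<^sup>2)"
    by (intro P.integrable_const_bound[where B = "N\<^sup>2"]) auto
  have "(\<integral>y. (S y / N)\<^sup>2 \<partial>PiM J (\<lambda>_. M)) = (\<integral>y. (S y)\<^sup>2 \<partial>PiM J (\<lambda>_. M)) / N\<^sup>2"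
    by (simp add: power_divide)
  also have "\<dots> \<le> N / N\<^sup>2"
    using integral_sq_sum_coords_le[OF assms(1,3) bounded centered] \<open>N > 0\<close>
    unfolding S_def N_def by (simp add: divide_right_mono)
  also have "\<dots> = 1 / N"
    by (simp add: power2_eq_square)
  finally show ?thesis
    using S_sq_int \<open>N > 0\<close> unfolding S_def[symmetric] N_def[symmetric]
    by (simp add: ennreal_power nn_integral_eq_integral ennreal_leI power_divide)
qed

lemma ennreal_power2_le_imp_le:
  assumes "x\<^sup>2 \<le> (ennreal y)\<^sup>2" "0 \<le> y"
  shows "x \<le> ennreal y"
  using assms by (cases x) (auto simp: ennreal_power top_power_ennreal top_unique intro: power2_le_imp_le)

lemma (in prob_space) nn_integral_abs_mean_coords_le:
  fixes g :: "'a \<Rightarrow> real"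
  assumes "finite J" "J \<noteq> {}" and [measurable]: "g \<in> borel_measurable M"
    and "\<And>x. \<bar>g x\<bar> \<le> 1" "expectation g = 0"
  shows "(\<integral>\<^sup>+y. ennreal \<bar>(\<Sum>t\<in>J. g (y t)) / card J\<bar> \<partial>PiM J (\<lambda>_. M)) \<le> ennreal (1 / sqrt (card J))"
proof (rule ennreal_power2_le_imp_le)
  interpret P: prob_space "PiM J (\<lambda>_. M)" by (rule prob_space_PiM) (rule prob_space_axioms)
  let ?Z = "\<lambda>y. ennreal \<bar>(\<Sum>t\<in>J. g (y t)) / card J\<bar>"
  have "(\<integral>\<^sup>+y. ?Z y \<partial>PiM J (\<lambda>_. M))\<^sup>2 \<le> (\<integral>\<^sup>+y. ?Z y ^ 2 \<partial>PiM J (\<lambda>_. M))"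
    using Cauchy_Schwarz_nn_integral[of ?Z "PiM J (\<lambda>_. M)" "\<lambda>_. 1"] by (simp add: P.emeasure_space_1)
  also have "\<dots> \<le> ennreal (1 / card J)"
    by (rule nn_integral_sq_mean_coords_le) fact+
  also have "\<dots> = (ennreal (1 / sqrt (card J)))\<^sup>2"
    by (simp add: ennreal_power power_divide)
  finally show "(\<integral>\<^sup>+y. ?Z y \<partial>PiM J (\<lambda>_. M))\<^sup>2 \<le> (ennreal (1 / sqrt (card J)))\<^sup>2" .
qed simp

lemma measurable_PiM_cantor_cong:
  "sets \<mu> = sets cantor \<Longrightarrow> measurable (PiM I (\<lambda>_. \<mu>)) N = measurable (PiM I (\<lambda>_. cantor)) N"
  by (intro measurable_cong_sets sets_PiM_cong) auto

lemma Mean_eq_integral_of_bool: "Mean \<mu> j = (\<integral>x. of_bool (x j) \<partial>\<mu>)"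
  unfolding Mean_def of_bool_def ..

lemma nn_integral_empirical_mean_error_le:
  assumes "prob_on_cantor \<mu>" "finite J" "J \<noteq> {}"
  shows "(\<integral>\<^sup>+y. ennreal \<bar>empirical_mean J y j - Mean \<mu> j\<bar> \<partial>PiM J (\<lambda>_. \<mu>)) \<le> ennreal (1 / sqrt (card J))"
proof -
  interpret prob_space \<mu> using assms(1) by (simp add: prob_on_cantor_def)
  have "sets \<mu> = sets cantor" using assms(1) by (simp add: prob_on_cantor_def)
  then have [measurable]: "(\<lambda>x. x j) \<in> measurable \<mu> (count_space UNIV)"
    using measurable_cantor_coord[of j] measurable_cong_sets[of \<mu> cantor "count_space UNIV" "count_space UNIV"] by simp
  define g where "g x = of_bool (x j) - Mean \<mu> j" for x :: "nat \<Rightarrow> bool"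
  have g_meas: "g \<in> borel_measurable \<mu>"
    unfolding g_def by measurable
  have int: "integrable \<mu> (\<lambda>x. of_bool (x j) :: real)"
    by (intro integrable_const_bound[where B = 1]) auto
  then have "Mean \<mu> j \<in> {0..1}"
    unfolding Mean_eq_integral_of_bool by (auto intro!: integral_nonneg_AE integral_le_const)
  then have bounded: "\<bar>g x\<bar> \<le> 1" for x
    by (auto simp: g_def)
  have "expectation g = expectation (\<lambda>x. of_bool (x j)) - expectation (\<lambda>_. Mean \<mu> j)"
    unfolding g_def using int by (intro Bochner_Integration.integral_diff) auto
  then have centered: "expectation g = 0"
    by (simp add: Mean_eq_integral_of_bool prob_space)
  have "empirical_mean J y j - Mean \<mu> j = (\<Sum>t\<in>J. g (y t)) / card J" for y
    using assms(2,3) by (simp add: g_def empirical_mean_def sum_subtractf diff_divide_distrib)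
  then show ?thesis
    using nn_integral_abs_mean_coords_le[OF assms(2,3) g_meas bounded centered] by simp
qed

lemma nn_integral_PiM_restrict:
  assumes "prob_space M" "I \<subseteq> K" "finite K" and [measurable]: "F \<in> borel_measurable (PiM I (\<lambda>_. M))"
  shows "(\<integral>\<^sup>+S. F (restrict S I) \<partial>PiM K (\<lambda>_. M)) = (\<integral>\<^sup>+x. F x \<partial>PiM I (\<lambda>_. M))"
proof -
  interpret product_prob_space "\<lambda>_. M" by (rule product_prob_spaceI) (rule assms(1))
  have "(\<integral>\<^sup>+x. F x \<partial>PiM I (\<lambda>_. M)) = (\<integral>\<^sup>+x. F x \<partial>distr (PiM K (\<lambda>_. M)) (PiM I (\<lambda>_. M)) (\<lambda>S. restrict S I))"
    using distr_restrict[OF assms(2,3)] by (rule arg_cong)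
  also have "\<dots> = (\<integral>\<^sup>+S. F (restrict S I) \<partial>PiM K (\<lambda>_. M))"
    using assms(2) by (intro nn_integral_distr measurable_restrict_subset) auto
  finally show ?thesis ..
qed

lemma empirical_mean_merge:
  "I \<inter> J = {} \<Longrightarrow> empirical_mean J (merge I J (x, y)) = empirical_mean J y"
  unfolding empirical_mean_def by (intro ext arg_cong2[where f = "(/)"] sum.cong) (auto simp: merge_def)

lemma nn_integral_empirical_mean_error_at_le:
  assumes \<mu>: "prob_on_cantor \<mu>" and "I \<inter> J = {}" "finite I" "finite J" "J \<noteq> {}"
    and [measurable]: "c \<in> measurable (PiM I (\<lambda>_. cantor)) (count_space UNIV)"
  shows "(\<integral>\<^sup>+S. ennreal \<bar>empirical_mean J S (c (restrict S I)) - Mean \<mu> (c (restrict S I))\<bar> \<partial>PiM (I \<union> J) (\<lambda>_. \<mu>))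
    \<le> ennreal (1 / sqrt (card J))"
proof -
  have "prob_space \<mu>" and sets: "sets \<mu> = sets cantor"
    using \<mu> by (simp_all add: prob_on_cantor_def)
  interpret product_sigma_finite "\<lambda>_. \<mu>"
    unfolding product_sigma_finite_def by (simp add: prob_space_imp_sigma_finite \<open>prob_space \<mu>\<close>)
  interpret PI: prob_space "PiM I (\<lambda>_. \<mu>)" using \<open>prob_space \<mu>\<close> by (rule prob_space_PiM)
  define F where "F S = ennreal \<bar>empirical_mean J S (c (restrict S I)) - Mean \<mu> (c (restrict S I))\<bar>" for S
  have [measurable]: "(\<lambda>S. restrict S I) \<in> measurable (PiM (I \<union> J) (\<lambda>_. cantor)) (PiM I (\<lambda>_. cantor))"
    by (rule measurable_restrict_subset) auto
  have [measurable]: "(\<lambda>S. empirical_mean J S j) \<in> borel_measurable (PiM (I \<union> J) (\<lambda>_. cantor))" for j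
    by (rule measurable_empirical_mean) auto
  have "F \<in> borel_measurable (PiM (I \<union> J) (\<lambda>_. \<mu>))"
    unfolding measurable_PiM_cantor_cong[OF sets] F_def by measurable
  then have "(\<integral>\<^sup>+S. F S \<partial>PiM (I \<union> J) (\<lambda>_. \<mu>)) =
      (\<integral>\<^sup>+x. \<integral>\<^sup>+y. F (merge I J (x, y)) \<partial>PiM J (\<lambda>_. \<mu>) \<partial>PiM I (\<lambda>_. \<mu>))"
    by (rule product_nn_integral_fold[OF assms(2-4)])
  also have "\<dots> \<le> (\<integral>\<^sup>+x. ennreal (1 / sqrt (card J)) \<partial>PiM I (\<lambda>_. \<mu>))"
  proof (rule nn_integral_mono)
    fix x
    have "F (merge I J (x, y)) = ennreal \<bar>empirical_mean J y (c (restrict x I)) - Mean \<mu> (c (restrict x I))\<bar>" for y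
      using \<open>I \<inter> J = {}\<close> by (simp add: F_def empirical_mean_merge)
    then show "(\<integral>\<^sup>+y. F (merge I J (x, y)) \<partial>PiM J (\<lambda>_. \<mu>)) \<le> ennreal (1 / sqrt (card J))"
      using nn_integral_empirical_mean_error_le[OF \<mu> assms(4,5)] by simp
  qed
  also have "\<dots> = ennreal (1 / sqrt (card J))"
    by (simp add: PI.emeasure_space_1)
  finally show ?thesis unfolding F_def .
qed

definition UME_learner :: "(nat \<Rightarrow> estimator) \<Rightarrow> (nat \<Rightarrow> bool) measure set \<Rightarrow> bool" where
  "UME_learner A Q \<longleftrightarrow>
     (\<forall>n. A n \<in> measurable (\<Pi>\<^sub>M i\<in>{..<n}. cantor) (\<Pi>\<^sub>M j\<in>UNIV. borel)) \<and>
     (\<forall>n S j. A n S j \<in> {0..1}) \<and>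
     (\<forall>\<mu>\<in>Q. (\<lambda>n. sup_err n (A n) \<mu>) \<longlonglongrightarrow> 0)"

lemma UME_learnable_iff_learner: "UME_learnable Q \<longleftrightarrow> (\<exists>A. UME_learner A Q)"
  unfolding UME_learnable_def UME_learner_def ..

lemma sup_err_eq_nn_integral_sup_dist:
  "sup_err n A \<mu> = (\<integral>\<^sup>+S. sup_dist (A S) (Mean \<mu>) \<partial>PiM {..<n} (\<lambda>_. \<mu>))"
  unfolding sup_err_def samples_def sup_dist_def ..

lemma nn_integral_first_half_error:
  assumes A_meas: "\<And>a m. A a m \<in> measurable (\<Pi>\<^sub>M i\<in>{..<m}. cantor) (\<Pi>\<^sub>M j\<in>UNIV. borel)"
    and \<mu>: "prob_on_cantor \<mu>"
  shows "(\<integral>\<^sup>+S. sup_dist (first_half_estimates A n S a) (Mean \<mu>) \<partial>PiM {..<n} (\<lambda>_. \<mu>)) =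
    sup_err (n div 2) (A a (n div 2)) \<mu>"
proof -
  have "prob_space \<mu>" and sets: "sets \<mu> = sets cantor"
    using \<mu> by (simp_all add: prob_on_cantor_def)
  have "(\<lambda>x. sup_dist (A a (n div 2) x) (Mean \<mu>)) \<in> borel_measurable (\<Pi>\<^sub>M i\<in>{..<n div 2}. cantor)"
    using A_meas[of a "n div 2"] by measurable
  then have "(\<lambda>x. sup_dist (A a (n div 2) x) (Mean \<mu>)) \<in> borel_measurable (\<Pi>\<^sub>M i\<in>{..<n div 2}. \<mu>)"
    by (simp only: measurable_PiM_cantor_cong[OF sets])
  from nn_integral_PiM_restrict[OF \<open>prob_space \<mu>\<close> _ _ this, of "{..<n}"] show ?thesis
    unfolding sup_err_eq_nn_integral_sup_dist first_half_estimates_def by simp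
qed

lemma nn_integral_holdout_error_le:
  fixes \<delta> :: real and a b :: nat
  assumes A_meas: "\<And>a m. A a m \<in> measurable (\<Pi>\<^sub>M i\<in>{..<m}. cantor) (\<Pi>\<^sub>M j\<in>UNIV. borel)"
    and \<mu>: "prob_on_cantor \<mu>" and "0 < n"
  defines "c x \<equiv> near_max_coord \<delta> (first_half_estimates A n x a) (first_half_estimates A n x b)"
  shows "(\<integral>\<^sup>+S. ennreal \<bar>(empirical_mean {n div 2..<n} S - Mean \<mu>) (c S)\<bar> \<partial>PiM {..<n} (\<lambda>_. \<mu>)) \<le>
    ennreal (1 / sqrt (real (n - n div 2)))"
proof -
  define I where "I = {..<n div 2}"
  define J where "J = {n div 2..<n}"
  have IJ: "I \<inter> J = {}" "I \<union> J = {..<n}" "finite I" "finite J" "J \<noteq> {}" "card J = n - n div 2"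
    using \<open>0 < n\<close> by (auto simp: I_def J_def)
  have c_meas: "c \<in> measurable (PiM I (\<lambda>_. cantor)) (count_space UNIV)"
    unfolding c_def using measurable_first_half_estimates[OF A_meas] by (measurable; simp add: I_def)
  have c_restrict: "c (restrict S I) = c S" for S
    by (simp add: c_def first_half_estimates_def I_def)
  have "(\<integral>\<^sup>+S. ennreal \<bar>empirical_mean J S (c S) - Mean \<mu> (c S)\<bar> \<partial>PiM (I \<union> J) (\<lambda>_. \<mu>)) \<le>
      ennreal (1 / sqrt (card J))"
    using nn_integral_empirical_mean_error_at_le[OF \<mu> IJ(1,3,4,5) c_meas] by (simp only: c_restrict)
  then show ?thesis
    unfolding IJ(2,6) by (simp add: J_def)
qed

lemma sup_err_tournament_estimator_le:
  assumes A_meas: "\<And>a m. A a m \<in> measurable (\<Pi>\<^sub>M i\<in>{..<m}. cantor) (\<Pi>\<^sub>M j\<in>UNIV. borel)"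
    and A_range: "\<And>a m S j. A a m S j \<in> {0..1}"
    and \<mu>: "prob_on_cantor \<mu>" and "i < K n" "0 < n"
  shows "sup_err n (tournament_estimator A K n) \<mu> \<le>
    3 * sup_err (n div 2) (A i (n div 2)) \<mu> + 2 * ennreal (real (K n) ^ 2 / sqrt (real (n - n div 2))) + ennreal (1 / Suc n)"
proof -
  have "prob_space \<mu>" and sets: "sets \<mu> = sets cantor"
    using \<mu> by (simp_all add: prob_on_cantor_def)
  define M where "M = PiM {..<n} (\<lambda>_. \<mu>)"
  interpret M: prob_space M unfolding M_def using \<open>prob_space \<mu>\<close> by (rule prob_space_PiM)
  define p where "p = Mean \<mu>"
  define v where "v S = first_half_estimates A n S" for S
  define e where "e S = empirical_mean {n div 2..<n} S" for S
  define \<delta> where "\<delta> = 1 / real (Suc n)"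
  define \<eta> where "\<eta> a b S = ennreal \<bar>(e S - p) (near_max_coord \<delta> (v S a) (v S b))\<bar>" for a b S
  have [measurable]: "(\<lambda>S. v S a j) \<in> borel_measurable (\<Pi>\<^sub>M i\<in>{..<n}. cantor)" for a j
    unfolding v_def by (rule measurable_first_half_estimates[OF A_meas]) auto
  have [measurable]: "(\<lambda>S. e S j) \<in> borel_measurable (\<Pi>\<^sub>M i\<in>{..<n}. cantor)" for j
    unfolding e_def by (rule measurable_empirical_mean) auto
  have [measurable]: "(\<lambda>S. sup_dist (v S i) p) \<in> borel_measurable M" "\<eta> a b \<in> borel_measurable M" for a b
    unfolding M_def measurable_PiM_cantor_cong[OF sets] \<eta>_def fun_diff_def by measurable
  have "(\<Sum>a<K n. \<Sum>b<K n. \<integral>\<^sup>+S. \<eta> a b S \<partial>M) \<le> (\<Sum>a<K n. \<Sum>b<K n. ennreal (1 / sqrt (real (n - n div 2))))"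
    unfolding \<eta>_def e_def p_def v_def M_def
    by (intro sum_mono nn_integral_holdout_error_le[OF A_meas \<mu> \<open>0 < n\<close>])
  also have "\<dots> = ennreal (real (K n) ^ 2 / sqrt (real (n - n div 2)))"
    by (simp add: ennreal_of_nat_eq_real_of_nat power2_eq_square flip: ennreal_mult')
  finally have holdout: "(\<Sum>a<K n. \<Sum>b<K n. \<integral>\<^sup>+S. \<eta> a b S \<partial>M) \<le> ennreal (real (K n) ^ 2 / sqrt (real (n - n div 2)))" .
  have "sup_err n (tournament_estimator A K n) \<mu> =
      (\<integral>\<^sup>+S. sup_dist (v S (tournament_winner \<delta> (K n) (v S) (e S))) p \<partial>M)"
    unfolding sup_err_eq_nn_integral_sup_dist tournament_estimator_def M_def p_def v_def e_def \<delta>_def ..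
  also have "\<dots> \<le> (\<integral>\<^sup>+S. 3 * sup_dist (v S i) p + 2 * (\<Sum>a<K n. \<Sum>b<K n. \<eta> a b S) + ennreal \<delta> \<partial>M)"
    unfolding \<eta>_def using A_range \<open>i < K n\<close>
    by (intro nn_integral_mono sup_dist_tournament_winner_le) (auto simp: v_def first_half_estimates_def \<delta>_def)
  also have "\<dots> =
      3 * (\<integral>\<^sup>+S. sup_dist (v S i) p \<partial>M) + 2 * (\<Sum>a<K n. \<Sum>b<K n. \<integral>\<^sup>+S. \<eta> a b S \<partial>M) + ennreal \<delta>"
    by (simp add: nn_integral_add nn_integral_cmult nn_integral_sum M.emeasure_space_1)
  also have "\<dots> \<le> 3 * sup_err (n div 2) (A i (n div 2)) \<mu> + 2 * ennreal (real (K n) ^ 2 / sqrt (real (n - n div 2))) + ennreal \<delta>"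
    using holdout nn_integral_first_half_error[OF A_meas \<mu>, where n = n and a = i]
    unfolding M_def v_def p_def by (intro add_mono mult_left_mono order.refl) auto
  finally show ?thesis unfolding \<delta>_def .
qed

lemma tournament_estimator_consistent:
  assumes A_meas: "\<And>a m. A a m \<in> measurable (\<Pi>\<^sub>M i\<in>{..<m}. cantor) (\<Pi>\<^sub>M j\<in>UNIV. borel)"
    and A_range: "\<And>a m S j. A a m S j \<in> {0..1}"
    and \<mu>: "prob_on_cantor \<mu>" and learns: "(\<lambda>n. sup_err n (A i n) \<mu>) \<longlonglongrightarrow> 0"
    and K_unbounded: "filterlim K at_top sequentially"
    and K_slow: "(\<lambda>n. real (K n) ^ 2 / sqrt n) \<longlonglongrightarrow> 0"
  shows "(\<lambda>n. sup_err n (tournament_estimator A K n) \<mu>) \<longlonglongrightarrow> 0"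
proof (rule tendsto_sandwich[OF _ _ tendsto_const])
  have "\<forall>\<^sub>F n in sequentially. i < K n"
    using eventually_gt_at_top K_unbounded by (rule eventually_compose_filterlim)
  then show "\<forall>\<^sub>F n in sequentially. sup_err n (tournament_estimator A K n) \<mu> \<le>
      3 * sup_err (n div 2) (A i (n div 2)) \<mu> + 2 * ennreal (real (K n) ^ 2 / sqrt (real (n - n div 2))) + ennreal (1 / Suc n)"
    using eventually_gt_at_top[of 0]
    by eventually_elim (rule sup_err_tournament_estimator_le[OF A_meas A_range \<mu>])
  have "(\<lambda>n. sup_err (n div 2) (A i (n div 2)) \<mu>) \<longlonglongrightarrow> 0"
    by (rule filterlim_compose[OF learns filterlim_at_top_div_const_nat]) simp
  moreover have "(\<lambda>n. real (K n) ^ 2 / sqrt (real (n - n div 2))) \<longlonglongrightarrow> 0"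
  proof (rule tendsto_sandwich[OF _ _ tendsto_const])
    show "(\<lambda>n. sqrt 2 * (real (K n) ^ 2 / sqrt n)) \<longlonglongrightarrow> 0"
      using tendsto_mult_right_zero[OF K_slow] .
    have "real (K n) ^ 2 / sqrt (real (n - n div 2)) \<le> sqrt 2 * (real (K n) ^ 2 / sqrt n)" for n
    proof (cases "n = 0")
      case False
      have "sqrt n / sqrt 2 \<le> sqrt (real (n - n div 2))"
        by (simp add: divide_le_eq mult.commute flip: real_sqrt_mult)
      then have "real (K n) ^ 2 / sqrt (real (n - n div 2)) \<le> real (K n) ^ 2 / (sqrt n / sqrt 2)"
        using False by (intro divide_left_mono) auto
      then show ?thesis by (simp add: mult.commute)
    qed simp
    then show "\<forall>\<^sub>F n in sequentially. real (K n) ^ 2 / sqrt (real (n - n div 2)) \<le> sqrt 2 * (real (K n) ^ 2 / sqrt n)"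
      by simp
  qed simp
  moreover have "(\<lambda>n. 1 / real (Suc n)) \<longlonglongrightarrow> 0"
    by real_asymp
  ultimately have "(\<lambda>n. 3 * sup_err (n div 2) (A i (n div 2)) \<mu> +
      2 * ennreal (real (K n) ^ 2 / sqrt (real (n - n div 2))) + ennreal (1 / Suc n)) \<longlonglongrightarrow> 3 * 0 + 2 * ennreal 0 + ennreal 0"
    by (intro tendsto_add ennreal_tendsto_cmult tendsto_ennrealI) auto
  then show "(\<lambda>n. 3 * sup_err (n div 2) (A i (n div 2)) \<mu> +
      2 * ennreal (real (K n) ^ 2 / sqrt (real (n - n div 2))) + ennreal (1 / Suc n)) \<longlonglongrightarrow> 0"
    by simp
qed simp

definition tournament_size :: "nat \<Rightarrow> nat" where
  "tournament_size n = nat \<lfloor>real n powr (1/8)\<rfloor>"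

lemma filterlim_tournament_size: "filterlim tournament_size at_top sequentially"
proof -
  have "filterlim (\<lambda>n::nat. real n powr (1/8)) at_top sequentially"
    by real_asymp
  then show ?thesis unfolding tournament_size_def
    by (intro filterlim_compose[OF filterlim_nat_sequentially] filterlim_compose[OF filterlim_floor_sequentially])
qed

lemma tournament_size_sq_over_sqrt: "(\<lambda>n. real (tournament_size n) ^ 2 / sqrt n) \<longlonglongrightarrow> 0"
proof (rule tendsto_sandwich[OF _ _ tendsto_const])
  have "real (tournament_size n) \<le> real n powr (1/8)" for n
    by (simp add: tournament_size_def)
  then show "\<forall>\<^sub>F n in sequentially. real (tournament_size n) ^ 2 / sqrt n \<le> (real n powr (1/8)) ^ 2 / sqrt n"
    by (intro always_eventually allI divide_right_mono power_mono) auto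
  show "(\<lambda>n. (real n powr (1/8)) ^ 2 / sqrt n) \<longlonglongrightarrow> 0"
    by real_asymp
qed simp

theorem theorem3:
  fixes Q :: "nat \<Rightarrow> (nat \<Rightarrow> bool) measure set"
  assumes "\<And>i. \<forall>\<mu>\<in>Q i. prob_on_cantor \<mu>"
    and "\<And>i. UME_learnable (Q i)"
  shows "UME_learnable (\<Union>i. Q i)"
proof -
  have "\<forall>i. \<exists>B. UME_learner B (Q i)"
    using assms(2) by (simp add: UME_learnable_iff_learner)
  then obtain A where A: "\<forall>i. UME_learner (A i) (Q i)"
    by (rule choice[THEN exE])
  then have A_meas: "\<And>a m. A a m \<in> measurable (\<Pi>\<^sub>M i\<in>{..<m}. cantor) (\<Pi>\<^sub>M j\<in>UNIV. borel)"
    and A_range: "\<And>a m S j. A a m S j \<in> {0..1}"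
    by (simp_all add: UME_learner_def)
  have "UME_learner (tournament_estimator A tournament_size) (\<Union>i. Q i)"
    unfolding UME_learner_def
  proof (intro conjI allI ballI)
    show "tournament_estimator A tournament_size n \<in> measurable (\<Pi>\<^sub>M i\<in>{..<n}. cantor) (\<Pi>\<^sub>M j\<in>UNIV. borel)" for n
      by (rule measurable_tournament_estimator[OF A_meas])
    show "tournament_estimator A tournament_size n S j \<in> {0..1}" for n S j
      unfolding tournament_estimator_def first_half_estimates_def by (rule A_range)
    fix \<mu> assume "\<mu> \<in> (\<Union>i. Q i)"
    then obtain i where "\<mu> \<in> Q i" by blast
    then have "prob_on_cantor \<mu>" and "(\<lambda>n. sup_err n (A i n) \<mu>) \<longlonglongrightarrow> 0"
      using assms(1) A by (auto simp: UME_learner_def)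
    then show "(\<lambda>n. sup_err n (tournament_estimator A tournament_size n) \<mu>) \<longlonglongrightarrow> 0"
      by (rule tournament_estimator_consistent[OF A_meas A_range _ _ filterlim_tournament_size tournament_size_sq_over_sqrt])
  qed
  then show ?thesis
    unfolding UME_learnable_iff_learner by blast
qed

end
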